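(* Let $O=(O_i)_{i\in\overline{\mathbb V}}\in\mathbb R_+^{\overline{\mathbb V}}$ with $O_i=T_i$ for $i\in\partial\mathbb V$, and let $K=(K_i)_{i\in\overline{\mathbb V}}\in\mathbb N_0^{\overline{\mathbb V}}$. Then for every $t\ge0$, $\mathbb E_O\left(\prod_{i\in\overline{\mathbb V}}O_i(t)^{K_i}\right)=\mathbb E_K\left(\prod_{i\in\overline{\mathbb V}}O_i^{K_i(t)}\right),$ where on the left the expectation is over the opinion process $O(t)$ started from $O$ (with $K$ fixed), and on the right over the absorbed discrete KMP process $K(t)$ started from $K$ (with $O$ fixed).
   Context: Graph: $(\overline{\mathbb V},\overline E)$ is a finite oriented graph; $\overline{\mathbb V}=\mathbb V\cup\partial\mathbb V$ (internal and boundary vertices). $E$ is the set of edges with both endpoints in $\mathbb V$, $\partial E$ the set of edges with one endpoint in $\partial\mathbb V$; no edges join two boundary vertices; every boundary edge is written $ij$ with $i\in\mathbb V$, $j\in\partial\mathbb V$; $\overline E=E\cup\partial E$, at most one edge per pair of vertices. Each $j\in\partial\mathbb V$ carries a fixed value $T_j>0$. $\mathbb N_0=\{0,1,2,\dots\}$. Opinion process: Markov process on $\mathbb R_+^{\overline{\mathbb V}}$ with $O_j\equiv T_j$ for $j\in\partial\mathbb V$ and generator $L^Of(O)=\sum_{ij\in\overline E}\int_0^1dv\,[f(H^O_{ij;v}O)-f(O)]$, where $(H^O_{ij;v}O)_\ell=vO_i+(1-v)O_j$ for $\ell\in\{i,j\}\cap\mathbb V$ and $(H^O_{ij;v}O)_\ell=O_\ell$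 otherwise. Absorbed discrete KMP process: Markov process on $\mathbb N_0^{\overline{\mathbb V}}$ with generator $L^K_0f(\underline k)=\sum_{ij\in E}\frac1{k_i+k_j+1}\sum_{h=0}^{k_i+k_j}[f(H_{ij;h}\underline k)-f(\underline k)]+\sum_{ij\in\partial E}\frac1{k_i+1}\sum_{h=0}^{k_i}[f(H_{ij;h}\underline k)-f(\underline k)]$, where $(H_{ij;h}\underline k)_i=h$, $(H_{ij;h}\underline k)_j=k_i+k_j-h$, and other coordinates unchanged. *)

theory Defs
  imports "HOL-Analysis.Analysis"
begin

text \<open>Vertices have type 'v.  V = internal vertices, BV = boundary vertices.
  Edges are oriented pairs (i,j); E = internal edges, dE = boundary edges (i in V, j in BV).\<close>

definition opinion_update :: "'v set \<Rightarrow> 'v \<times> 'v \<Rightarrow> real \<Rightarrow> ('v \<Rightarrow> real) \<Rightarrow> ('v \<Rightarrow> real)" where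
  "opinion_update V e v Op =
     (\<lambda>l. if l \<in> {fst e, snd e} \<inter> V then v * Op (fst e) + (1 - v) * Op (snd e) else Op l)"

definition opinion_gen :: "'v set \<Rightarrow> ('v \<times> 'v) set \<Rightarrow> (('v \<Rightarrow> real) \<Rightarrow> real) \<Rightarrow> ('v \<Rightarrow> real) \<Rightarrow> real" where
  "opinion_gen V Eb f Op =
     (\<Sum>e\<in>Eb. integral {0..1::real} (\<lambda>v. f (opinion_update V e v Op) - f Op))"

definition kmp_update :: "'v \<times> 'v \<Rightarrow> nat \<Rightarrow> ('v \<Rightarrow> nat) \<Rightarrow> ('v \<Rightarrow> nat)" where
  "kmp_update e h k = k(fst e := h, snd e := k (fst e) + k (snd e) - h)"

definition kmp_gen :: "('v \<times> 'v) set \<Rightarrow> ('v \<times> 'v) set \<Rightarrow> (('v \<Rightarrow> nat) \<Rightarrow> real) \<Rightarrow> ('v \<Rightarrow> nat) \<Rightarrow> real" where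
  "kmp_gen E dE f k =
     (\<Sum>e\<in>E. (1 / real (k (fst e) + k (snd e) + 1)) *
        (\<Sum>h=0..k (fst e) + k (snd e). f (kmp_update e h k) - f k))
   + (\<Sum>e\<in>dE. (1 / real (k (fst e) + 1)) *
        (\<Sum>h=0..k (fst e). f (kmp_update e h k) - f k))"

text \<open>Both processes are pure-jump Markov processes with bounded total jump rate
  (each edge rings at rate 1), so their transition semigroup is e^{tL}:
  E_x f(X(t)) = (e^{tL} f)(x) = \<Sum>n. t^n/n! (L^n f)(x).\<close>
definition semigroup_expect :: "(('s \<Rightarrow> real) \<Rightarrow> ('s \<Rightarrow> real)) \<Rightarrow> real \<Rightarrow> ('s \<Rightarrow> real) \<Rightarrow> 's \<Rightarrow> real" where
  "semigroup_expect L t f x = (\<Sum>n. t ^ n / fact n * (L ^^ n) f x)"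

end

theory Submission
  imports Defs
begin

text \<open>
  Write D(X, k) = \<Prod>i. X i ^ k i.  An opinion jump on the edge ij replaces X i (and X j, if j is
  internal) by v X i + (1 - v) X j with v uniform on [0, 1], and the expansion
  \<integral> (v a + (1 - v) b)^m dv over [0, 1] = (\<Sum>h\<le>m. a^h b^(m-h)) / (m + 1)
  turns this into a uniform redistribution of the m = k i + k j (resp. k i) particles over the
  edge, i.e. into a KMP jump of the second argument of D.  Hence the two generators agree on D.
  Since the KMP generator is a finite linear combination of point evaluations and the opinion
  generator is linear, they commute, so the duality relation passes to all powers of the
  generators and therefore to every term of the exponential series.  The argument is purely
  algebraic.
\<close>

abbreviation duality_fun :: "'v set \<Rightarrow> ('v \<Rightarrow> real) \<Rightarrow> ('v \<Rightarrow> nat) \<Rightarrow> real" where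
  "duality_fun A X k \<equiv> \<Prod>i\<in>A. X i ^ k i"

lemma integral_power_convex_comb:
  fixes a b :: real
  shows "integral {0..1} (\<lambda>v. (v * a + (1 - v) * b) ^ n) = (\<Sum>h=0..n. a ^ h * b ^ (n - h)) / real (n + 1)"
proof (cases "a = b")
  case True
  have "(\<Sum>h=0..n. a ^ h * b ^ (n - h)) = (\<Sum>h=0..n. b ^ n)"
    using True by (intro sum.cong) (auto simp: power_add [symmetric])
  then show ?thesis
    using True by (simp add: field_simps)
next
  case False
  define F where "F v = (v * a + (1 - v) * b) ^ Suc n / (real (Suc n) * (a - b))" for v
  have "(F has_real_derivative (v * a + (1 - v) * b) ^ n) (at v within {0..1})" for v
  proof -
    have "((\<lambda>v. v * a + (1 - v) * b) has_real_derivative a - b) (at v within {0..1})"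
      by (auto intro!: derivative_eq_intros)
    from DERIV_power [OF this, of "Suc n"]
    have "((\<lambda>v. (v * a + (1 - v) * b) ^ Suc n) has_real_derivative
        real (Suc n) * (v * a + (1 - v) * b) ^ n * (a - b)) (at v within {0..1})"
      by (simp add: ac_simps)
    from DERIV_cdivide [OF this, of "real (Suc n) * (a - b)"]
    show ?thesis
      unfolding F_def using False by simp
  qed
  then have "((\<lambda>v. (v * a + (1 - v) * b) ^ n) has_integral (F 1 - F 0)) {0..1}"
    by (intro fundamental_theorem_of_calculus) (auto simp: has_real_derivative_iff_has_vector_derivative)
  then have "integral {0..1} (\<lambda>v. (v * a + (1 - v) * b) ^ n) = (a ^ Suc n - b ^ Suc n) / (real (Suc n) * (a - b))"
    by (simp add: integral_unique F_def diff_divide_distrib)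
  also have "a ^ Suc n - b ^ Suc n = (a - b) * (\<Sum>h<Suc n. b ^ (Suc n - Suc h) * a ^ h)"
    by (rule power_diff_sumr2)
  also have "(\<Sum>h<Suc n. b ^ (Suc n - Suc h) * a ^ h) = (\<Sum>h=0..n. a ^ h * b ^ (n - h))"
    by (intro sum.cong) (auto simp: atLeast0AtMost lessThan_Suc_atMost)
  finally show ?thesis
    using False by simp
qed

lemma integral_scaled_power_convex_comb_diff:
  fixes R a b c :: real
  assumes "\<And>h. h \<le> m \<Longrightarrow> Q h = R * (a ^ h * b ^ (m - h))"
  shows "integral {0..1} (\<lambda>v. R * (v * a + (1 - v) * b) ^ m - c) = 1 / real (m + 1) * (\<Sum>h=0..m. Q h - c)"
proof -
  have "integral {0..1} (\<lambda>v. R * (v * a + (1 - v) * b) ^ m - c)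
      = R * integral {0..1} (\<lambda>v. (v * a + (1 - v) * b) ^ m) - c"
    by (subst integral_diff) (auto intro!: integrable_continuous_real continuous_intros)
  also have "\<dots> = 1 / real (m + 1) * (\<Sum>h=0..m. R * (a ^ h * b ^ (m - h)) - c)"
    unfolding integral_power_convex_comb by (simp add: sum_subtractf sum_distrib_left field_simps)
  also have "\<dots> = 1 / real (m + 1) * (\<Sum>h=0..m. Q h - c)"
    using assms by simp
  finally show ?thesis .
qed

lemma prod_remove_two:
  assumes "finite A" "i \<in> A" "j \<in> A" "i \<noteq> j"
  shows "(\<Prod>l\<in>A. f l) = f i * (f j * (\<Prod>l\<in>A - {i} - {j}. f l))"
  using assms by (simp add: prod.remove [of A i] prod.remove [of "A - {i}" j])

lemma integral_opinion_update_internal_edge: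
  assumes "finite A" "i \<in> A" "j \<in> A" "i \<noteq> j" "i \<in> V" "j \<in> V"
  shows "integral {0..1} (\<lambda>v. duality_fun A (opinion_update V (i, j) v X) k - duality_fun A X k)
       = 1 / real (k i + k j + 1) *
           (\<Sum>h=0..k i + k j. duality_fun A X (kmp_update (i, j) h k) - duality_fun A X k)"
proof -
  define R where "R = (\<Prod>l\<in>A - {i} - {j}. X l ^ k l)"
  have "duality_fun A (opinion_update V (i, j) v X) k = R * (v * X i + (1 - v) * X j) ^ (k i + k j)" for v
  proof -
    have "(\<Prod>l\<in>A - {i} - {j}. opinion_update V (i, j) v X l ^ k l) = R"
      unfolding R_def by (intro prod.cong) (auto simp: opinion_update_def)
    then show ?thesis
      using assms by (simp add: prod_remove_two opinion_update_def power_add)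
  qed
  moreover have "duality_fun A X (kmp_update (i, j) h k) = R * (X i ^ h * X j ^ (k i + k j - h))" for h
  proof -
    have "(\<Prod>l\<in>A - {i} - {j}. X l ^ kmp_update (i, j) h k l) = R"
      unfolding R_def by (intro prod.cong) (auto simp: kmp_update_def)
    then show ?thesis
      using assms by (simp add: prod_remove_two kmp_update_def)
  qed
  ultimately show ?thesis
    by (simp add: integral_scaled_power_convex_comb_diff)
qed

lemma integral_opinion_update_boundary_edge:
  assumes "finite A" "i \<in> A" "j \<in> A" "i \<noteq> j" "i \<in> V" "j \<notin> V"
  shows "integral {0..1} (\<lambda>v. duality_fun A (opinion_update V (i, j) v X) k - duality_fun A X k)
       = 1 / real (k i + 1) * (\<Sum>h=0..k i. duality_fun A X (kmp_update (i, j) h k) - duality_fun A X k)"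
proof -
  define R where "R = (\<Prod>l\<in>A - {i} - {j}. X l ^ k l) * X j ^ k j"
  have "duality_fun A (opinion_update V (i, j) v X) k = R * (v * X i + (1 - v) * X j) ^ k i" for v
  proof -
    have "(\<Prod>l\<in>A - {i} - {j}. opinion_update V (i, j) v X l ^ k l) = (\<Prod>l\<in>A - {i} - {j}. X l ^ k l)"
      by (intro prod.cong) (auto simp: opinion_update_def)
    then show ?thesis
      using assms by (simp add: prod_remove_two opinion_update_def R_def ac_simps)
  qed
  moreover have "duality_fun A X (kmp_update (i, j) h k) = R * (X i ^ h * X j ^ (k i - h))"
    if "h \<le> k i" for h
  proof -
    have "(\<Prod>l\<in>A - {i} - {j}. X l ^ kmp_update (i, j) h k l) = (\<Prod>l\<in>A - {i} - {j}. X l ^ k l)"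
      by (intro prod.cong) (auto simp: kmp_update_def)
    moreover have "k i + k j - h = (k i - h) + k j"
      using that by simp
    ultimately show ?thesis
      using assms by (simp add: prod_remove_two kmp_update_def R_def power_add ac_simps)
  qed
  ultimately show ?thesis
    by (simp add: integral_scaled_power_convex_comb_diff)
qed

lemma opinion_gen_duality_fun:
  assumes "finite V" "finite BV" "V \<inter> BV = {}" "E \<subseteq> V \<times> V" "dE \<subseteq> V \<times> BV"
    and "\<forall>(i, j)\<in>E. i \<noteq> j"
  shows "opinion_gen V (E \<union> dE) (\<lambda>X. duality_fun (V \<union> BV) X k) X
       = kmp_gen E dE (duality_fun (V \<union> BV) X) k"
proof -
  let ?A = "V \<union> BV"
  let ?F = "\<lambda>e. integral {0..1} (\<lambda>v. duality_fun ?A (opinion_update V e v X) k - duality_fun ?A X k)"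
  have "finite E"
    using assms(1,4) finite_subset by blast
  moreover have "finite dE"
    using assms(1,2,5) finite_subset by blast
  moreover have "E \<inter> dE = {}"
    using assms(3-5) by blast
  ultimately have "opinion_gen V (E \<union> dE) (\<lambda>X. duality_fun ?A X k) X = sum ?F E + sum ?F dE"
    unfolding opinion_gen_def by (simp add: sum.union_disjoint)
  also have "sum ?F E = (\<Sum>e\<in>E. 1 / real (k (fst e) + k (snd e) + 1) *
      (\<Sum>h=0..k (fst e) + k (snd e). duality_fun ?A X (kmp_update e h k) - duality_fun ?A X k))"
  proof (intro sum.cong refl)
    fix e assume "e \<in> E"
    with assms(4,6) obtain i j where e: "e = (i, j)" "i \<in> V" "j \<in> V" "i \<noteq> j"
      by blast
    show "?F e = 1 / real (k (fst e) + k (snd e) + 1) *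
        (\<Sum>h=0..k (fst e) + k (snd e). duality_fun ?A X (kmp_update e h k) - duality_fun ?A X k)"
      unfolding e(1) fst_conv snd_conv
      by (rule integral_opinion_update_internal_edge) (use assms e in auto)
  qed
  also have "sum ?F dE = (\<Sum>e\<in>dE. 1 / real (k (fst e) + 1) *
      (\<Sum>h=0..k (fst e). duality_fun ?A X (kmp_update e h k) - duality_fun ?A X k))"
  proof (intro sum.cong refl)
    fix e assume "e \<in> dE"
    with assms(3,5) obtain i j where e: "e = (i, j)" "i \<in> V" "j \<in> BV" "j \<notin> V"
      by blast
    show "?F e = 1 / real (k (fst e) + 1) *
        (\<Sum>h=0..k (fst e). duality_fun ?A X (kmp_update e h k) - duality_fun ?A X k)"
      unfolding e(1) fst_conv snd_conv
      by (rule integral_opinion_update_boundary_edge) (use assms e in auto)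
  qed
  finally show ?thesis
    unfolding kmp_gen_def .
qed

definition opinion_integrable :: "'v set \<Rightarrow> (('v \<Rightarrow> real) \<Rightarrow> real) \<Rightarrow> bool" where
  "opinion_integrable V f \<longleftrightarrow> (\<forall>e X. (\<lambda>v. f (opinion_update V e v X)) integrable_on {0..1})"

lemma opinion_integrableD: "opinion_integrable V f \<Longrightarrow> (\<lambda>v. f (opinion_update V e v X)) integrable_on {0..1}"
  unfolding opinion_integrable_def by blast

lemma opinion_integrable_add:
  "opinion_integrable V f \<Longrightarrow> opinion_integrable V g \<Longrightarrow> opinion_integrable V (\<lambda>X. f X + g X)"
  unfolding opinion_integrable_def by (auto intro!: integrable_add)

lemma opinion_integrable_diff:
  "opinion_integrable V f \<Longrightarrow> opinion_integrable V g \<Longrightarrow> opinion_integrable V (\<lambda>X. f X - g X)"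
  unfolding opinion_integrable_def by (auto intro!: integrable_diff)

lemma opinion_integrable_cmult:
  "opinion_integrable V f \<Longrightarrow> opinion_integrable V (\<lambda>X. c * f X)"
  unfolding opinion_integrable_def by (auto intro!: integrable_on_mult_right)

lemma opinion_integrable_sum:
  "finite S \<Longrightarrow> (\<And>x. x \<in> S \<Longrightarrow> opinion_integrable V (f x)) \<Longrightarrow> opinion_integrable V (\<lambda>X. \<Sum>x\<in>S. f x X)"
  unfolding opinion_integrable_def by (auto intro!: integrable_sum)

lemma opinion_integrable_duality_fun: "opinion_integrable V (\<lambda>X. duality_fun A X k)"
  unfolding opinion_integrable_def
proof (intro allI)
  fix e X
  have "continuous_on {0..1} (\<lambda>v. opinion_update V e v X i)" for i
    by (cases "i \<in> {fst e, snd e} \<inter> V") (auto simp: opinion_update_def intro!: continuous_intros)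
  then show "(\<lambda>v. duality_fun A (opinion_update V e v X) k) integrable_on {0..1}"
    by (intro integrable_continuous_real continuous_on_prod continuous_on_power)
qed

lemma opinion_gen_add:
  assumes "opinion_integrable V f" "opinion_integrable V g"
  shows "opinion_gen V Eb (\<lambda>X. f X + g X) X = opinion_gen V Eb f X + opinion_gen V Eb g X"
  unfolding opinion_gen_def sum.distrib [symmetric]
proof (intro sum.cong refl)
  fix e
  show "integral {0..1} (\<lambda>v. f (opinion_update V e v X) + g (opinion_update V e v X) - (f X + g X))
      = integral {0..1} (\<lambda>v. f (opinion_update V e v X) - f X)
        + integral {0..1} (\<lambda>v. g (opinion_update V e v X) - g X)"
    by (subst integral_add [symmetric])
      (auto intro!: integrable_diff opinion_integrableD [OF assms(1)] opinion_integrableD [OF assms(2)]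
        simp: algebra_simps)
qed

lemma opinion_gen_diff:
  assumes "opinion_integrable V f" "opinion_integrable V g"
  shows "opinion_gen V Eb (\<lambda>X. f X - g X) X = opinion_gen V Eb f X - opinion_gen V Eb g X"
  unfolding opinion_gen_def sum_subtractf [symmetric]
proof (intro sum.cong refl)
  fix e
  show "integral {0..1} (\<lambda>v. f (opinion_update V e v X) - g (opinion_update V e v X) - (f X - g X))
      = integral {0..1} (\<lambda>v. f (opinion_update V e v X) - f X)
        - integral {0..1} (\<lambda>v. g (opinion_update V e v X) - g X)"
    by (subst integral_diff [symmetric])
      (auto intro!: integrable_diff opinion_integrableD [OF assms(1)] opinion_integrableD [OF assms(2)]
        simp: algebra_simps)
qed

lemma opinion_gen_cmult: "opinion_gen V Eb (\<lambda>X. c * f X) X = c * opinion_gen V Eb f X"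
  unfolding opinion_gen_def by (simp add: right_diff_distrib [symmetric] sum_distrib_left)

lemma opinion_gen_sum:
  assumes "finite S" "\<And>x. x \<in> S \<Longrightarrow> opinion_integrable V (f x)"
  shows "opinion_gen V Eb (\<lambda>X. \<Sum>x\<in>S. f x X) X = (\<Sum>x\<in>S. opinion_gen V Eb (f x) X)"
  using assms
proof (induction S rule: finite_induct)
  case empty
  then show ?case
    by (simp add: opinion_gen_def)
next
  case (insert x S)
  then show ?case
    by (simp add: opinion_gen_add opinion_integrable_sum)
qed

lemma opinion_integrable_kmp_gen:
  assumes "finite E" "finite dE" "\<And>k'. opinion_integrable V (G k')"
  shows "opinion_integrable V (\<lambda>X. kmp_gen E dE (\<lambda>k'. G k' X) k)"
  unfolding kmp_gen_def using assms
  by (intro opinion_integrable_add opinion_integrable_sum opinion_integrable_cmult opinion_integrable_diff) auto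

lemma opinion_gen_kmp_gen_commute:
  assumes "finite E" "finite dE" "\<And>k'. opinion_integrable V (G k')"
  shows "opinion_gen V Eb (\<lambda>X. kmp_gen E dE (\<lambda>k'. G k' X) k) X
       = kmp_gen E dE (\<lambda>k'. opinion_gen V Eb (G k') X) k"
  unfolding kmp_gen_def using assms
  by (simp only: opinion_gen_add opinion_gen_diff opinion_gen_cmult opinion_gen_sum
      opinion_integrable_add opinion_integrable_diff opinion_integrable_cmult opinion_integrable_sum
      finite_atLeastAtMost)

lemma opinion_gen_kmp_gen_pow_commute:
  assumes "finite E" "finite dE" "\<And>k'. opinion_integrable V (G k')"
  shows "opinion_gen V Eb (\<lambda>X. (kmp_gen E dE ^^ n) (\<lambda>k'. G k' X) k) X
       = (kmp_gen E dE ^^ n) (\<lambda>k'. opinion_gen V Eb (G k') X) k"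
  using assms(3)
proof (induction n arbitrary: G k)
  case 0
  then show ?case by simp
next
  case (Suc n)
  define G' where "G' k'' X = kmp_gen E dE (\<lambda>k'. G k' X) k''" for k'' X
  have "opinion_integrable V (G' k'')" for k''
    unfolding G'_def using assms(1,2) Suc.prems by (rule opinion_integrable_kmp_gen)
  then have "opinion_gen V Eb (\<lambda>X. (kmp_gen E dE ^^ n) (\<lambda>k''. G' k'' X) k) X
      = (kmp_gen E dE ^^ n) (\<lambda>k''. opinion_gen V Eb (G' k'') X) k"
    by (rule Suc.IH)
  also have "(\<lambda>k''. opinion_gen V Eb (G' k'') X) = kmp_gen E dE (\<lambda>k'. opinion_gen V Eb (G k') X)"
    unfolding G'_def using opinion_gen_kmp_gen_commute [OF assms(1,2) Suc.prems] by auto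
  finally show ?case
    unfolding funpow_Suc_right G'_def by (simp add: comp_def)
qed

lemma opinion_gen_pow_duality_fun:
  assumes "finite V" "finite BV" "V \<inter> BV = {}" "E \<subseteq> V \<times> V" "dE \<subseteq> V \<times> BV"
    and "\<forall>(i, j)\<in>E. i \<noteq> j"
  shows "(opinion_gen V (E \<union> dE) ^^ n) (\<lambda>X. duality_fun (V \<union> BV) X k) X
       = (kmp_gen E dE ^^ n) (duality_fun (V \<union> BV) X) k"
proof (induction n arbitrary: k X)
  case 0
  then show ?case by simp
next
  case (Suc n)
  let ?LO = "opinion_gen V (E \<union> dE)" and ?LK = "kmp_gen E dE" and ?D = "duality_fun (V \<union> BV)"
  have "finite E" "finite dE"
    using assms(1,2,4,5) finite_subset by blast+
  have "(?LO ^^ n) (\<lambda>X. ?D X k) = (\<lambda>X. (?LK ^^ n) (?D X) k)"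
    by (intro ext Suc.IH)
  then have "(?LO ^^ Suc n) (\<lambda>X. ?D X k) X = ?LO (\<lambda>X. (?LK ^^ n) (?D X) k) X"
    by simp
  also have "\<dots> = (?LK ^^ n) (\<lambda>k'. ?LO (\<lambda>X. ?D X k') X) k"
    using \<open>finite E\<close> \<open>finite dE\<close> opinion_integrable_duality_fun
    by (rule opinion_gen_kmp_gen_pow_commute)
  also have "(\<lambda>k'. ?LO (\<lambda>X. ?D X k') X) = ?LK (?D X)"
    using opinion_gen_duality_fun [OF assms] by blast
  finally show ?case
    unfolding funpow_Suc_right by simp
qed

theorem mainTheorem6:
  fixes V BV :: "'v set" and E dE :: "('v \<times> 'v) set"
    and T Op :: "'v \<Rightarrow> real" and K :: "'v \<Rightarrow> nat" and t :: real
  assumes "finite V" and "finite BV" and "V \<inter> BV = {}"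
    and "E \<subseteq> V \<times> V" and "dE \<subseteq> V \<times> BV"
    and "\<forall>(i,j)\<in>E. i \<noteq> j"
    and "\<forall>(i,j)\<in>E. (j,i) \<notin> E"
    and "\<forall>j\<in>BV. T j > 0"
    and "\<forall>i\<in>V \<union> BV. Op i \<ge> 0"
    and "\<forall>j\<in>BV. Op j = T j"
    and "t \<ge> 0"
  shows "semigroup_expect (opinion_gen V (E \<union> dE)) t (\<lambda>Op'. \<Prod>i\<in>V \<union> BV. Op' i ^ K i) Op
       = semigroup_expect (kmp_gen E dE) t (\<lambda>K'. \<Prod>i\<in>V \<union> BV. Op i ^ K' i) K"
  unfolding semigroup_expect_def opinion_gen_pow_duality_fun [OF assms(1-6)] ..

end
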